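(* Let $\mathcal{P}$ be a finite poset of composition length at least $3$ whose Hasse diagram is a rooted tree, and assume the root has a unique successor. Let $M$ be a $k\mathcal{P}$-module such that $[M]\in\mathsf{G}^0(\mathcal{P},k)$, i.e. $\partial_0^*M\cong\partial_1^*M$ as $k\mathcal{G}^{\mathcal{P}}_1$-modules. Then $$M\cong\underline{k}^{\oplus n}\oplus S_{\mathcal{P}}^{\oplus d}$$ for some non-negative integers $n,d$; in fact $n=\operatorname{rank}M(x<y)$ for any strict relation $x<y$ in $\mathcal{P}$ and $d=\dim_k\ker M(x<y)$ for any non-maximal $x$ and any $y>x$.
   Context: A poset is viewed as a category with a unique morphism $x\to y$ iff $x\le y$; a $k\mathcal{P}$-module is a functor to finite-dimensional $k$-vector spaces ($k$ a field). The composition length is the maximal length of a chain of covering relations. The Hasse diagram is a rooted tree means there is a unique minimal element (the root) and every other element has exactly one lower cover; a successor of $x$ is an upper cover of $x$. $\underline{k}$ is the constant module with value $k$ and identity maps; $S_{\mathcal{P}}$ is the module with value $k$ at every element and zero maps for all strict relations. $\mathcal{G}^{\mathcal{P}}_1$ is the poset of strict relations $a<b$ (written $[a<b]$) with $[a<b]\le[c<d]$ iff they are equal or $b\le c$; $\partial_0[a<b]=b$, $\partial_1[a<b]=a$, $F^*M=M\circ F$; $\mathsf{G}^0(\mathcal{P},k)$ is the kernel of $\partial_0^*-\partial_1^*$ on the split Grothendieck group of $k\mathcal{P}$-modules. *)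

theory Defs
  imports "Jordan_Normal_Form.Matrix_Kernel" "Jordan_Normal_Form.DL_Rank"
begin

definition partial_order_on' :: "'a set \<Rightarrow> ('a \<Rightarrow> 'a \<Rightarrow> bool) \<Rightarrow> bool" where
  "partial_order_on' P leq \<longleftrightarrow>
     (\<forall>x\<in>P. leq x x) \<and>
     (\<forall>x\<in>P. \<forall>y\<in>P. leq x y \<and> leq y x \<longrightarrow> x = y) \<and>
     (\<forall>x\<in>P. \<forall>y\<in>P. \<forall>z\<in>P. leq x y \<and> leq y z \<longrightarrow> leq x z)"

definition strict :: "('a \<Rightarrow> 'a \<Rightarrow> bool) \<Rightarrow> 'a \<Rightarrow> 'a \<Rightarrow> bool" where
  "strict leq x y \<longleftrightarrow> leq x y \<and> x \<noteq> y"

definition covers :: "'a set \<Rightarrow> ('a \<Rightarrow> 'a \<Rightarrow> bool) \<Rightarrow> 'a \<Rightarrow> 'a \<Rightarrow> bool" where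
  "covers P leq x y \<longleftrightarrow> x \<in> P \<and> y \<in> P \<and> strict leq x y \<and>
      \<not> (\<exists>z\<in>P. strict leq x z \<and> strict leq z y)"

definition comp_length :: "'a set \<Rightarrow> ('a \<Rightarrow> 'a \<Rightarrow> bool) \<Rightarrow> nat" where
  "comp_length P leq = Max {n. \<exists>c :: nat \<Rightarrow> 'a. \<forall>i<n. covers P leq (c i) (c (Suc i))}"

definition hasse_rooted_tree :: "'a set \<Rightarrow> ('a \<Rightarrow> 'a \<Rightarrow> bool) \<Rightarrow> 'a \<Rightarrow> bool" where
  "hasse_rooted_tree P leq r \<longleftrightarrow>
     r \<in> P \<and> (\<forall>x\<in>P. (\<not> (\<exists>y\<in>P. strict leq y x)) \<longleftrightarrow> x = r) \<and>
     (\<forall>x\<in>P - {r}. \<exists>!y. covers P leq y x)"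

(* A kP-module, with M(x) = k^(dim x) and structure maps as matrices
   (every finite-dimensional k-vector space is isomorphic to some k^n). *)
type_synonym ('a, 'k) pmod = "('a \<Rightarrow> nat) \<times> ('a \<Rightarrow> 'a \<Rightarrow> 'k mat)"

definition is_pmod :: "'a set \<Rightarrow> ('a \<Rightarrow> 'a \<Rightarrow> bool) \<Rightarrow> ('a, 'k::field) pmod \<Rightarrow> bool" where
  "is_pmod P leq M \<longleftrightarrow>
     (\<forall>x\<in>P. \<forall>y\<in>P. leq x y \<longrightarrow> snd M x y \<in> carrier_mat (fst M y) (fst M x)) \<and>
     (\<forall>x\<in>P. snd M x x = 1\<^sub>m (fst M x)) \<and>
     (\<forall>x\<in>P. \<forall>y\<in>P. \<forall>z\<in>P. leq x y \<and> leq y z \<longrightarrow> snd M y z * snd M x y = snd M x z)"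

definition pmod_iso :: "'a set \<Rightarrow> ('a \<Rightarrow> 'a \<Rightarrow> bool) \<Rightarrow> ('a, 'k::field) pmod \<Rightarrow> ('a, 'k) pmod \<Rightarrow> bool" where
  "pmod_iso P leq M N \<longleftrightarrow>
     (\<exists>\<phi>. (\<forall>x\<in>P. \<phi> x \<in> carrier_mat (fst N x) (fst M x) \<and> invertible_mat (\<phi> x)) \<and>
          (\<forall>x\<in>P. \<forall>y\<in>P. leq x y \<longrightarrow> \<phi> y * snd M x y = snd N x y * \<phi> x))"

definition pmod_sum :: "('a, 'k::field) pmod \<Rightarrow> ('a, 'k) pmod \<Rightarrow> ('a, 'k) pmod" where
  "pmod_sum M N = ((\<lambda>x. fst M x + fst N x),
     (\<lambda>x y. four_block_mat (snd M x y) (0\<^sub>m (fst M y) (fst N x))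
                           (0\<^sub>m (fst N y) (fst M x)) (snd N x y)))"

definition pmod_zero :: "('a, 'k::field) pmod" where
  "pmod_zero = ((\<lambda>x. 0), (\<lambda>x y. 0\<^sub>m 0 0))"

fun pmod_pow :: "('a, 'k::field) pmod \<Rightarrow> nat \<Rightarrow> ('a, 'k) pmod" where
  "pmod_pow M 0 = pmod_zero"
| "pmod_pow M (Suc n) = pmod_sum M (pmod_pow M n)"

definition const_mod :: "('a, 'k::field) pmod" where
  "const_mod = ((\<lambda>x. 1), (\<lambda>x y. 1\<^sub>m 1))"

definition S_mod :: "('a, 'k::field) pmod" where
  "S_mod = ((\<lambda>x. 1), (\<lambda>x y. if x = y then 1\<^sub>m 1 else 0\<^sub>m 1 1))"

(* the poset G_1^P of strict relations [a<b], encoded as pairs (a,b) *)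
definition G1_carrier :: "'a set \<Rightarrow> ('a \<Rightarrow> 'a \<Rightarrow> bool) \<Rightarrow> ('a \<times> 'a) set" where
  "G1_carrier P leq = {(a, b). a \<in> P \<and> b \<in> P \<and> strict leq a b}"

definition G1_le :: "('a \<Rightarrow> 'a \<Rightarrow> bool) \<Rightarrow> ('a \<times> 'a) \<Rightarrow> ('a \<times> 'a) \<Rightarrow> bool" where
  "G1_le leq u v \<longleftrightarrow> u = v \<or> leq (snd u) (fst v)"

definition d0 :: "('a \<times> 'a) \<Rightarrow> 'a" where "d0 u = snd u"
definition d1 :: "('a \<times> 'a) \<Rightarrow> 'a" where "d1 u = fst u"

definition pullback :: "('b \<Rightarrow> 'a) \<Rightarrow> ('a, 'k::field) pmod \<Rightarrow> ('b, 'k) pmod" where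
  "pullback F M = ((\<lambda>u. fst M (F u)), (\<lambda>u v. snd M (F u) (F v)))"

definition mat_rank :: "'k::field mat \<Rightarrow> nat" where
  "mat_rank A = vec_space.rank (dim_row A) A"

end

theory Submission
  imports Defs
begin

(* Every element lies above the root r, and each iso phi[a<b] : M b -> M a identifies the stalks,
   so all stalks are k^m. Let s be the unique successor of r and E = M(r<s) phi[r<s], an
   endomorphism of M(s). Naturality of phi along [r<s] <= [s<x] gives M(s<x) = phi[s<x]^-1 E, and
   along [r<s] <= [t<w] for a chain s < t < w (composition length >= 3) it gives E = C E^2 with
   C invertible. Hence rank E = rank E^2, so E is similar to U + 0 with U invertible (Fitting).
   Transporting this splitting of M(s) to all stalks gives bases in which every M(x<y) is
   diag(1_n, 0_d), i.e. M = k^n + S^d, and rank and kernel dimension are read off. *)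

section \<open>Invertible and block-diagonal matrices\<close>

definition mat_inverses :: "nat \<Rightarrow> 'a::semiring_1 mat \<Rightarrow> 'a mat \<Rightarrow> bool" where
  "mat_inverses n A B \<longleftrightarrow>
     A \<in> carrier_mat n n \<and> B \<in> carrier_mat n n \<and> A * B = 1\<^sub>m n \<and> B * A = 1\<^sub>m n"

lemma mat_inverses_carrier:
  "mat_inverses n A B \<Longrightarrow> A \<in> carrier_mat n n"
  "mat_inverses n A B \<Longrightarrow> B \<in> carrier_mat n n"
  unfolding mat_inverses_def by auto

lemma mat_inverses_one: "mat_inverses n (1\<^sub>m n) (1\<^sub>m n)"
  unfolding mat_inverses_def by simp

lemma mat_inverses_sym: "mat_inverses n A B \<Longrightarrow> mat_inverses n B A"
  unfolding mat_inverses_def by auto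

lemma mat_inverses_cancel_left:
  fixes A :: "'a::semiring_1 mat"
  assumes "mat_inverses n A B" and X: "X \<in> carrier_mat n k"
  shows "B * (A * X) = X"
proof -
  have "B * (A * X) = (B * A) * X"
    using assms by (metis assoc_mult_mat mat_inverses_carrier)
  then show ?thesis
    using assms unfolding mat_inverses_def by simp
qed

lemma mat_inverses_cancel_right:
  fixes A :: "'a::semiring_1 mat"
  assumes "mat_inverses n A B" and X: "X \<in> carrier_mat k n"
  shows "X * A * B = X"
proof -
  have "X * A * B = X * (A * B)"
    using assms by (metis assoc_mult_mat mat_inverses_carrier)
  then show ?thesis
    using assms unfolding mat_inverses_def by simp
qed

lemma mat_inverses_mult:
  fixes A :: "'a::semiring_1 mat"
  assumes "mat_inverses n A A'" "mat_inverses n B B'"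
  shows "mat_inverses n (A * B) (B' * A')"
proof -
  have c: "A \<in> carrier_mat n n" "A' \<in> carrier_mat n n" "B \<in> carrier_mat n n" "B' \<in> carrier_mat n n"
    using assms by (simp_all add: mat_inverses_carrier)
  have "A * B * (B' * A') = A * (B * (B' * A'))" using c by (simp add: assoc_mult_mat[of _ n n _ n _ n])
  also have "\<dots> = 1\<^sub>m n" using c assms(1) mat_inverses_cancel_left[OF mat_inverses_sym[OF assms(2)] c(2)]
    unfolding mat_inverses_def by simp
  finally have 1: "A * B * (B' * A') = 1\<^sub>m n" .
  have "B' * A' * (A * B) = B' * (A' * (A * B))" using c by (simp add: assoc_mult_mat[of _ n n _ n _ n])
  also have "\<dots> = 1\<^sub>m n" using c assms(2) mat_inverses_cancel_left[OF assms(1) c(3)]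
    unfolding mat_inverses_def by simp
  finally have 2: "B' * A' * (A * B) = 1\<^sub>m n" .
  show ?thesis unfolding mat_inverses_def using 1 2 c by simp
qed

lemma invertible_mat_iff_mat_inverses:
  fixes A :: "'a::semiring_1 mat"
  assumes "A \<in> carrier_mat n n"
  shows "invertible_mat A \<longleftrightarrow> (\<exists>B. mat_inverses n A B)"
proof
  assume "invertible_mat A"
  then obtain B where AB: "A * B = 1\<^sub>m n" and BA: "B * A = 1\<^sub>m (dim_row B)"
    using assms unfolding invertible_mat_def inverts_mat_def by auto
  have "B \<in> carrier_mat n n"
    using assms AB BA by (metis carrier_matD carrier_matI index_mult_mat(2,3) index_one_mat(2,3))
  then show "\<exists>B. mat_inverses n A B"
    using assms AB BA unfolding mat_inverses_def by auto
next
  assume "\<exists>B. mat_inverses n A B"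
  then show "invertible_mat A"
    unfolding mat_inverses_def invertible_mat_def inverts_mat_def square_mat.simps by auto
qed

definition block_diag :: "'a::zero mat \<Rightarrow> 'a mat \<Rightarrow> 'a mat" where
  "block_diag A B =
     four_block_mat A (0\<^sub>m (dim_row A) (dim_col B)) (0\<^sub>m (dim_row B) (dim_col A)) B"

lemma block_diag_carrier [simp]:
  "A \<in> carrier_mat n1 m1 \<Longrightarrow> B \<in> carrier_mat n2 m2 \<Longrightarrow>
    block_diag A B \<in> carrier_mat (n1 + n2) (m1 + m2)"
  unfolding block_diag_def by simp

lemma block_diag_mult:
  fixes A :: "'a::semiring_0 mat"
  assumes "A \<in> carrier_mat p q" "A' \<in> carrier_mat q p'" "B \<in> carrier_mat t u" "B' \<in> carrier_mat u t'"
  shows "block_diag A B * block_diag A' B' = block_diag (A * A') (B * B')"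
  unfolding block_diag_def using assms by (simp add: mult_four_block_mat[of _ p q _ u _ t _ _ p' _ t'])

lemma block_diag_one [simp]: "block_diag (1\<^sub>m n) (1\<^sub>m d) = (1\<^sub>m (n + d) :: 'a::zero_neq_one mat)"
  unfolding block_diag_def by simp

lemma mat_inverses_block_diag:
  fixes A :: "'a::semiring_1 mat"
  assumes "mat_inverses n A A'" "mat_inverses d B B'"
  shows "mat_inverses (n + d) (block_diag A B) (block_diag A' B')"
  using assms unfolding mat_inverses_def by (simp add: block_diag_mult[of _ n n _ n _ d d _ d])

definition proj_mat :: "nat \<Rightarrow> nat \<Rightarrow> 'a::{zero,one} mat" where
  "proj_mat n d = block_diag (1\<^sub>m n) (0\<^sub>m d d)"

lemma proj_mat_carrier [simp]: "proj_mat n d \<in> carrier_mat (n + d) (n + d)"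
  unfolding proj_mat_def by simp

lemma proj_mat_idem: "proj_mat n d * proj_mat n d = (proj_mat n d :: 'a::semiring_1 mat)"
  unfolding proj_mat_def by (simp add: block_diag_mult[of _ n n _ n _ d d _ d])

lemma uminus_zero_mat [simp]: "- (0\<^sub>m nr nc :: 'a::group_add mat) = 0\<^sub>m nr nc"
  by (rule eq_matI) auto

lemma mat_inverses_lower_block:
  fixes A :: "'a::comm_ring_1 mat"
  assumes A: "mat_inverses p A A'" and C: "C \<in> carrier_mat q p"
  shows "mat_inverses (p + q) (four_block_mat A (0\<^sub>m p q) C (1\<^sub>m q))
           (four_block_mat A' (0\<^sub>m p q) (- (C * A')) (1\<^sub>m q))"
proof -
  have c: "A \<in> carrier_mat p p" "A' \<in> carrier_mat p p" and e: "A * A' = 1\<^sub>m p" "A' * A = 1\<^sub>m p"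
    using A unfolding mat_inverses_def by auto
  have "- (C * A') * A = - C"
    using c C e by (simp add: assoc_mult_mat[of _ q p _ p _ p])
  moreover have "C * A' + - (C * A') = 0\<^sub>m q p"
    using c C by (simp add: add_uminus_minus_mat[of _ q p])
  ultimately show ?thesis
    unfolding mat_inverses_def using c C e
    by (simp add: mult_four_block_mat[of _ p p _ q _ q _ _ p _ q])
qed

lemma mat_inverses_upper_unitriangular:
  fixes Y :: "'a::comm_ring_1 mat"
  assumes "Y \<in> carrier_mat p q"
  shows "mat_inverses (p + q) (four_block_mat (1\<^sub>m p) Y (0\<^sub>m q p) (1\<^sub>m q))
           (four_block_mat (1\<^sub>m p) (- Y) (0\<^sub>m q p) (1\<^sub>m q))"
  unfolding mat_inverses_def using assms
  by (simp add: mult_four_block_mat[of _ p p _ q _ q _ _ p _ q] add_uminus_minus_mat)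

lemma mat_inverses_solve:
  fixes A :: "'a::semiring_1 mat"
  assumes X: "mat_inverses n X X'" and Y: "mat_inverses n Y Y'" and A: "A \<in> carrier_mat n n"
  shows "A = X' * (X * A * Y) * Y'"
proof -
  have c: "X \<in> carrier_mat n n" "Y \<in> carrier_mat n n" "X' \<in> carrier_mat n n" "Y' \<in> carrier_mat n n"
    using X Y by (simp_all add: mat_inverses_carrier)
  have "X' * (X * A * Y) * Y' = X' * (X * A) * (Y * Y')"
    using c A by (simp add: assoc_mult_mat[of _ n n _ n _ n])
  then show ?thesis
    using mat_inverses_cancel_left[OF X A] Y A unfolding mat_inverses_def by simp
qed

definition mat_equiv :: "nat \<Rightarrow> 'a::semiring_1 mat \<Rightarrow> 'a mat \<Rightarrow> bool" where
  "mat_equiv n A B \<longleftrightarrow> B \<in> carrier_mat n n \<and>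
     (\<exists>X X' Y Y'. mat_inverses n X X' \<and> mat_inverses n Y Y' \<and> A = X * B * Y)"

lemma mat_equivI:
  fixes A :: "'a::semiring_1 mat"
  assumes X: "mat_inverses n X X'" and Y: "mat_inverses n Y Y'" and A: "A \<in> carrier_mat n n"
    and XAY: "X * A * Y = B"
  shows "mat_equiv n A B"
proof -
  have "B \<in> carrier_mat n n"
    unfolding XAY[symmetric] using A mat_inverses_carrier[OF X] mat_inverses_carrier[OF Y] by simp
  moreover have "A = X' * B * Y'"
    using mat_inverses_solve[OF X Y A] unfolding XAY .
  ultimately show ?thesis
    unfolding mat_equiv_def using mat_inverses_sym[OF X] mat_inverses_sym[OF Y] by blast
qed

lemma mat_equiv_trans:
  fixes A :: "'a::semiring_1 mat"
  assumes "mat_equiv n A B" and "mat_equiv n B C"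
  shows "mat_equiv n A C"
proof -
  obtain X X' Y Y' where X: "mat_inverses n X X'" and Y: "mat_inverses n Y Y'" and A: "A = X * B * Y"
    using assms(1) unfolding mat_equiv_def by blast
  obtain V V' W W' where V: "mat_inverses n V V'" and W: "mat_inverses n W W'" and B: "B = V * C * W"
    and C: "C \<in> carrier_mat n n"
    using assms(2) unfolding mat_equiv_def by blast
  have "A = (X * V) * C * (W * Y)"
    unfolding A B using C mat_inverses_carrier[OF X] mat_inverses_carrier[OF Y]
      mat_inverses_carrier[OF V] mat_inverses_carrier[OF W]
    by (simp add: assoc_mult_mat[of _ n n _ n _ n])
  then show ?thesis
    unfolding mat_equiv_def using C mat_inverses_mult[OF X V] mat_inverses_mult[OF W Y] by blast
qed

lemma mat_equiv_block_diag_one: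
  fixes A :: "'a::semiring_1 mat"
  assumes "mat_equiv n A B"
  shows "mat_equiv (p + n) (block_diag (1\<^sub>m p) A) (block_diag (1\<^sub>m p) B)"
proof -
  obtain X X' Y Y' where X: "mat_inverses n X X'" and Y: "mat_inverses n Y Y'" and A: "A = X * B * Y"
    and B: "B \<in> carrier_mat n n"
    using assms unfolding mat_equiv_def by blast
  have "block_diag (1\<^sub>m p) A = block_diag (1\<^sub>m p) X * block_diag (1\<^sub>m p) B * block_diag (1\<^sub>m p) Y"
    unfolding A using B mat_inverses_carrier[OF X] mat_inverses_carrier[OF Y]
    by (simp add: block_diag_mult[of _ p p _ p _ n n _ n])
  moreover have "block_diag (1\<^sub>m p) B \<in> carrier_mat (p + n) (p + n)"
    using B by simp
  ultimately show ?thesis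
    unfolding mat_equiv_def using mat_inverses_block_diag[OF mat_inverses_one[of p] X]
      mat_inverses_block_diag[OF mat_inverses_one[of p] Y] by blast
qed

lemma four_block_mat_eq_upper_left:
  assumes "four_block_mat A B C D = four_block_mat A' B' C' D'"
    and "A \<in> carrier_mat p q" "A' \<in> carrier_mat p q" "D \<in> carrier_mat r t" "D' \<in> carrier_mat r t"
  shows "A = A'"
proof (rule eq_matI)
  fix i j assume "i < dim_row A'" "j < dim_col A'"
  moreover have "four_block_mat A B C D $$ (i, j) = four_block_mat A' B' C' D' $$ (i, j)"
    using assms(1) by simp
  ultimately show "A $$ (i, j) = A' $$ (i, j)" using assms(2-5) by auto
qed (use assms in auto)

section \<open>Rank and kernel dimension\<close>

lemma mat_rank_plus_kernel_dim:
  fixes A :: "'k::field mat"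
  assumes A: "A \<in> carrier_mat nr nc"
  shows "mat_rank A + kernel_dim A = nc"
proof -
  interpret NR: vec_space "TYPE('k)" nr .
  interpret NC: vec_space "TYPE('k)" nc .
  interpret L: linear_map class_ring "module_vec TYPE('k) nc" "module_vec TYPE('k) nr" "\<lambda>v. A *\<^sub>v v"
  proof unfold_locales
    show "(\<lambda>v. A *\<^sub>v v) \<in>
        LinearCombinations.module_hom class_ring (module_vec TYPE('k) nc) (module_vec TYPE('k) nr)"
      unfolding LinearCombinations.module_hom_def using A
      by (auto simp: module_vec_simps mult_add_distrib_mat_vec mult_mat_vec)
  qed
  have im: "L.imT = NR.span (set (cols A))"
    using NR.col_space_eq[OF A] A unfolding NR.col_space_def mod_hom.im_def[OF L.mod_hom_axioms]
    by (auto simp: module_vec_simps)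
  have ker: "L.kerT = mat_kernel A"
    unfolding mod_hom.ker_def[OF L.mod_hom_axioms] mat_kernel_def using A
    by (auto simp: module_vec_simps)
  have "vectorspace.dim class_ring (NR.vs L.imT) + vectorspace.dim class_ring (NC.vs L.kerT) = NC.dim"
    by (rule L.rank_nullity) simp
  then have "NR.rank A + kernel_dim A = nc"
    unfolding im ker NR.rank_def NC.dim_is_n kernel_dim_def using A by simp
  then show ?thesis
    unfolding mat_rank_def using A by simp
qed

lemma kernel_dim_mult_invertible:
  fixes A :: "'k::field mat"
  assumes X: "mat_inverses n X X'" and Y: "mat_inverses n Y Y'" and A: "A \<in> carrier_mat n n"
  shows "kernel_dim (X * A * Y) = kernel_dim A"
proof -
  have c: "X \<in> carrier_mat n n" "X' \<in> carrier_mat n n" "Y \<in> carrier_mat n n" "Y' \<in> carrier_mat n n"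
    "X' * X = 1\<^sub>m n" "Y * Y' = 1\<^sub>m n"
    using X Y unfolding mat_inverses_def by auto
  have "mat_kernel (X * (A * Y)) = mat_kernel (A * Y)"
    by (rule mat_kernel_mult_eq[of _ n n]) (use c A in auto)
  then have "kernel_dim (X * A * Y) = kernel.dim n (A * Y)"
    unfolding kernel_dim_def using c A by (simp add: assoc_mult_mat[of _ n n _ n _ n])
  also have "\<dots> = kernel.dim n A"
    by (rule mat_kernel_dim_mult_eq_right[OF A c(3,4,6)])
  finally show ?thesis unfolding kernel_dim_def using A by simp
qed

lemma kernel_dim_proj_mat: "kernel_dim (proj_mat n d :: 'k::field mat) = d"
proof -
  have "kernel.dim d (0\<^sub>m d d :: 'k mat) = d"
  proof -
    have "mat_kernel (0\<^sub>m d d :: 'k mat) = carrier_vec d"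
      unfolding mat_kernel_def by auto
    moreover have "(module_vec TYPE('k) d)\<lparr>carrier := carrier_vec d\<rparr> = module_vec TYPE('k) d"
      unfolding module_vec_def by simp
    ultimately show ?thesis using vec_space.dim_is_n[of d, where 'a='k] by simp
  qed
  moreover have "kernel.dim (n + d) (proj_mat n d :: 'k mat)
      = kernel.dim n (1\<^sub>m n :: 'k mat) + kernel.dim d (0\<^sub>m d d :: 'k mat)"
    by (rule kernel_four_block_0_mat) (auto simp: proj_mat_def block_diag_def)
  moreover have "dim_col (proj_mat n d :: 'k mat) = n + d"
    using proj_mat_carrier by blast
  ultimately show ?thesis
    unfolding kernel_dim_def using kernel_one_mat(1)[of n, where 'a='k] by simp
qed

lemma mat_rank_kernel_dim_equiv_proj_mat:
  fixes A :: "'k::field mat"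
  assumes "mat_equiv (n + d) A (proj_mat n d)"
  shows "mat_rank A = n" and "kernel_dim A = d"
proof -
  obtain X X' Y Y' where X: "mat_inverses (n + d) X X'" and Y: "mat_inverses (n + d) Y Y'"
    and A_eq: "A = X * proj_mat n d * Y"
    using assms unfolding mat_equiv_def by blast
  show kd: "kernel_dim A = d"
    unfolding A_eq using kernel_dim_mult_invertible[OF X Y proj_mat_carrier]
    by (simp add: kernel_dim_proj_mat)
  have "A \<in> carrier_mat (n + d) (n + d)"
    unfolding A_eq using X Y by (meson mult_carrier_mat proj_mat_carrier mat_inverses_carrier)
  from mat_rank_plus_kernel_dim[OF this] show "mat_rank A = n"
    unfolding kd by simp
qed

section \<open>Rank normal form and Fitting decomposition\<close>

lemma block_elimination:
  fixes A :: "'a::comm_ring_1 mat"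
  assumes A: "mat_inverses p A A'" and B: "B \<in> carrier_mat p q" and C: "C \<in> carrier_mat q p"
    and D: "D \<in> carrier_mat q q"
  shows "\<exists>L L' R R'. mat_inverses (p + q) L L' \<and> mat_inverses (p + q) R R' \<and>
           L * four_block_mat A B C D * R = block_diag (1\<^sub>m p) (D - C * A' * B)"
proof -
  have c: "A \<in> carrier_mat p p" "A' \<in> carrier_mat p p" and e: "A' * A = 1\<^sub>m p"
    using A unfolding mat_inverses_def by auto
  define L where "L = four_block_mat A' (0\<^sub>m p q) (- (C * A')) (1\<^sub>m q)"
  define R where "R = four_block_mat (1\<^sub>m p) (- (A' * B)) (0\<^sub>m q p) (1\<^sub>m q)"
  have "- (C * (A' * B)) + D = D - C * (A' * B)"
    using c B C D by (intro eq_matI) auto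
  then have LM: "L * four_block_mat A B C D = four_block_mat (1\<^sub>m p) (A' * B) (0\<^sub>m q p) (D - C * A' * B)"
    unfolding L_def using c B C D e
    by (simp add: mult_four_block_mat[of _ p p _ q _ q _ _ p _ q])
  have "D - C * A' * B \<in> carrier_mat q q"
    using c B C D by (simp add: minus_carrier_mat)
  then have "L * four_block_mat A B C D * R = block_diag (1\<^sub>m p) (D - C * A' * B)"
    unfolding LM R_def block_diag_def using c B C D
    by (simp add: mult_four_block_mat[of _ p p _ q _ q _ _ p _ q] uminus_l_inv_mat[of "A' * B" p q])
  moreover have "mat_inverses (p + q) L (four_block_mat A (0\<^sub>m p q) C (1\<^sub>m q))"
    unfolding L_def using mat_inverses_sym[OF mat_inverses_lower_block[OF A C]] .
  moreover have "mat_inverses (p + q) R (four_block_mat (1\<^sub>m p) (A' * B) (0\<^sub>m q p) (1\<^sub>m q))"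
    unfolding R_def using mat_inverses_upper_unitriangular[of "- (A' * B)" p q] c B by simp
  ultimately show ?thesis by blast
qed

lemma swaprows_mat_corner:
  fixes A :: "'a::comm_ring_1 mat"
  assumes A: "A \<in> carrier_mat n n" and i: "i < n" and j: "j < n"
  shows "(swaprows_mat n 0 i * A * swaprows_mat n 0 j) $$ (0, 0) = A $$ (i, j)"
proof -
  let ?X = "swaprows 0 i A"
  have n: "0 < n" using i by auto
  have X: "?X \<in> carrier_mat n n" using A by auto
  have "(?X * swaprows_mat n 0 j) $$ (0, 0) = (\<Sum>t = 0..<n. ?X $$ (0, t) * swaprows_mat n 0 j $$ (t, 0))"
    using X n by (simp add: scalar_prod_def)
  also have "\<dots> = (\<Sum>t = 0..<n. if t = j then ?X $$ (0, t) else 0)"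
    by (rule sum.cong) (auto simp: n)
  also have "\<dots> = A $$ (i, j)" using A n j by auto
  finally show ?thesis
    unfolding swaprows_mat[OF A n i, symmetric] .
qed

lemma nonzero_mat_equiv_block_diag_one:
  fixes A :: "'k::field mat"
  assumes A: "A \<in> carrier_mat (Suc m) (Suc m)" and nonzero: "A \<noteq> 0\<^sub>m (Suc m) (Suc m)"
  shows "\<exists>B. B \<in> carrier_mat m m \<and> mat_equiv (Suc m) A (block_diag (1\<^sub>m 1) B)"
proof -
  obtain i j where i: "i < Suc m" and j: "j < Suc m" and aij: "A $$ (i, j) \<noteq> 0"
    using A nonzero by (metis eq_matI carrier_matD index_zero_mat(1,2,3))
  define S1 :: "'k mat" where "S1 = swaprows_mat (Suc m) 0 i"
  define S2 :: "'k mat" where "S2 = swaprows_mat (Suc m) 0 j"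
  have S1: "mat_inverses (Suc m) S1 S1" and S2: "mat_inverses (Suc m) S2 S2"
    unfolding S1_def S2_def mat_inverses_def using swaprows_mat_inv i j by auto
  define B where "B = S1 * A * S2"
  have "B \<in> carrier_mat (1 + m) (1 + m)" unfolding B_def S1_def S2_def using A by auto
  moreover obtain \<alpha> b c D where split: "split_block B 1 1 = (\<alpha>, b, c, D)"
    by (metis prod_cases4)
  ultimately have \<alpha>: "\<alpha> \<in> carrier_mat 1 1" and b: "b \<in> carrier_mat 1 m" and c: "c \<in> carrier_mat m 1"
    and D: "D \<in> carrier_mat m m" and B: "B = four_block_mat \<alpha> b c D"
    using split_block[OF split, of m m] by auto
  have "B $$ (0, 0) = A $$ (i, j)"
    unfolding B_def S1_def S2_def by (rule swaprows_mat_corner[OF A i j])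
  then have \<alpha>_eq: "\<alpha> = mat 1 1 (\<lambda>_. A $$ (i, j))"
    using \<alpha> b c D unfolding B by (auto intro!: eq_matI)
  have "mat_inverses 1 \<alpha> (mat 1 1 (\<lambda>_. inverse (A $$ (i, j))))"
    unfolding \<alpha>_eq mat_inverses_def using aij by (auto intro!: eq_matI simp: scalar_prod_def)
  from block_elimination[OF this b c D] obtain L L' R R' where
    L: "mat_inverses (Suc m) L L'" and R: "mat_inverses (Suc m) R R'"
    and LBR: "L * B * R = block_diag (1\<^sub>m 1) (D - c * mat 1 1 (\<lambda>_. inverse (A $$ (i, j))) * b)"
    unfolding B by auto
  have "L * S1 * A * (S2 * R) = L * B * R"
    unfolding B_def using A mat_inverses_carrier[OF L] mat_inverses_carrier[OF R]
      mat_inverses_carrier[OF S1] mat_inverses_carrier[OF S2]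
    by (simp add: assoc_mult_mat[of _ "Suc m" "Suc m" _ "Suc m" _ "Suc m"])
  moreover have "D - c * mat 1 1 (\<lambda>_. inverse (A $$ (i, j))) * b \<in> carrier_mat m m"
    using b c by (intro minus_carrier_mat mult_carrier_mat) auto
  ultimately show ?thesis
    using mat_equivI[OF mat_inverses_mult[OF L S1] mat_inverses_mult[OF S2 R] A] LBR by metis
qed

lemma proj_mat_Suc: "block_diag (1\<^sub>m 1) (proj_mat n d) = (proj_mat (Suc n) d :: 'a::{zero,one} mat)"
  unfolding proj_mat_def block_diag_def by (rule eq_matI) auto

lemma proj_mat_zero: "proj_mat 0 d = (0\<^sub>m d d :: 'a::{zero,one} mat)"
  unfolding proj_mat_def block_diag_def by (rule eq_matI) auto

lemma rank_normal_form:
  fixes A :: "'k::field mat"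
  assumes "A \<in> carrier_mat m m"
  shows "\<exists>n d. n + d = m \<and> mat_equiv m A (proj_mat n d)"
  using assms
proof (induction m arbitrary: A)
  case 0
  then have "1\<^sub>m 0 * A * 1\<^sub>m 0 = proj_mat 0 0"
    by (intro eq_matI) (auto simp: proj_mat_def block_diag_def)
  then show ?case using mat_equivI[OF mat_inverses_one mat_inverses_one 0] by blast
next
  case (Suc m)
  show ?case
  proof (cases "A = 0\<^sub>m (Suc m) (Suc m)")
    case True
    then have "1\<^sub>m (Suc m) * A * 1\<^sub>m (Suc m) = proj_mat 0 (Suc m)"
      by (simp add: proj_mat_zero)
    then show ?thesis using mat_equivI[OF mat_inverses_one mat_inverses_one Suc.prems] by force
  next
    case False
    obtain B where B: "B \<in> carrier_mat m m" and AB: "mat_equiv (Suc m) A (block_diag (1\<^sub>m 1) B)"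
      using nonzero_mat_equiv_block_diag_one[OF Suc.prems False] by blast
    obtain n d where nd: "n + d = m" and B_nf: "mat_equiv m B (proj_mat n d)"
      using Suc.IH[OF B] by blast
    from B_nf have "mat_equiv (1 + m) (block_diag (1\<^sub>m 1) B) (block_diag (1\<^sub>m 1) (proj_mat n d))"
      by (rule mat_equiv_block_diag_one)
    then have "mat_equiv (Suc m) (block_diag (1\<^sub>m 1) B) (proj_mat (Suc n) d)"
      unfolding proj_mat_Suc by simp
    then show ?thesis
      using mat_equiv_trans[OF AB] nd by (metis add_Suc)
  qed
qed

lemma upper_block_similar_block_diag:
  fixes G1 :: "'a::comm_ring_1 mat"
  assumes G1: "mat_inverses n G1 H" and G2: "G2 \<in> carrier_mat n d"
  shows "\<exists>T T'. mat_inverses (n + d) T T' \<and>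
           four_block_mat G1 G2 (0\<^sub>m d n) (0\<^sub>m d d) * T = T * block_diag G1 (0\<^sub>m d d)"
proof -
  have c: "G1 \<in> carrier_mat n n" "H \<in> carrier_mat n n" and e: "G1 * H = 1\<^sub>m n"
    using G1 unfolding mat_inverses_def by auto
  define T where "T = four_block_mat (1\<^sub>m n) (- (H * G2)) (0\<^sub>m d n) (1\<^sub>m d)"
  have "G1 * (H * G2) = G2"
    using c G2 e by (metis assoc_mult_mat left_mult_one_mat)
  then have "G1 * - (H * G2) + G2 = 0\<^sub>m n d"
    using c G2 by simp
  then have "four_block_mat G1 G2 (0\<^sub>m d n) (0\<^sub>m d d) * T = T * block_diag G1 (0\<^sub>m d d)"
    unfolding T_def block_diag_def using c G2
    by (simp add: mult_four_block_mat[of _ n n _ d _ d _ _ n _ d])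
  moreover have "mat_inverses (n + d) T (four_block_mat (1\<^sub>m n) (H * G2) (0\<^sub>m d n) (1\<^sub>m d))"
    unfolding T_def using mat_inverses_upper_unitriangular[of "- (H * G2)" n d] c G2 by simp
  ultimately show ?thesis by blast
qed

lemma proj_mat_regular_corner_invertible:
  fixes G :: "'k::field mat"
  assumes G: "G \<in> carrier_mat (n + d) (n + d)" and X: "X \<in> carrier_mat (n + d) (n + d)"
    and regular: "proj_mat n d = X * (proj_mat n d * G * proj_mat n d)"
    and split: "split_block G n n = (G1, G2, G3, G4)"
  shows "\<exists>H. mat_inverses n G1 H"
proof -
  obtain X1 X2 X3 X4 where splitX: "split_block X n n = (X1, X2, X3, X4)"
    by (metis prod_cases4)
  have G1: "G1 \<in> carrier_mat n n" and G2: "G2 \<in> carrier_mat n d" and G3: "G3 \<in> carrier_mat d n"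
    and G4: "G4 \<in> carrier_mat d d" and G_eq: "G = four_block_mat G1 G2 G3 G4"
    using split_block[OF split, of d d] G by auto
  have X1: "X1 \<in> carrier_mat n n" and X2: "X2 \<in> carrier_mat n d" and X3: "X3 \<in> carrier_mat d n"
    and X4: "X4 \<in> carrier_mat d d" and X_eq: "X = four_block_mat X1 X2 X3 X4"
    using split_block[OF splitX, of d d] X by auto
  have "X * (proj_mat n d * G * proj_mat n d) =
      four_block_mat (X1 * G1) (0\<^sub>m n d) (X3 * G1) (0\<^sub>m d d)"
    unfolding G_eq X_eq proj_mat_def block_diag_def using G1 G2 G3 G4 X1 X2 X3 X4
    by (simp add: mult_four_block_mat[of _ n n _ d _ d _ _ n _ d])
  then have "proj_mat n d = four_block_mat (X1 * G1) (0\<^sub>m n d) (X3 * G1) (0\<^sub>m d d)"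
    using regular by simp
  then have "1\<^sub>m n = X1 * G1"
    unfolding proj_mat_def block_diag_def
    by (rule four_block_mat_eq_upper_left) (use X1 G1 in auto)
  then have "mat_inverses n G1 X1"
    unfolding mat_inverses_def using mat_mult_left_right_inverse[OF X1 G1] X1 G1 by simp
  then show ?thesis by blast
qed

lemma regular_rank_form_corner_invertible:
  fixes E :: "'k::field mat"
  assumes P: "mat_inverses (n + d) P P'" and Q: "mat_inverses (n + d) Q Q'"
    and C: "mat_inverses (n + d) C C'" and E_eq: "E = P * proj_mat n d * Q" and regular: "E = C * E * E"
    and split: "split_block (Q * P) n n = (G1, G2, G3, G4)"
  shows "\<exists>H. mat_inverses n G1 H"
proof -
  define D :: "'k mat" where "D = proj_mat n d"
  have E_PDQ: "E = P * D * Q" unfolding D_def by (rule E_eq)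
  have D: "D \<in> carrier_mat (n + d) (n + d)" unfolding D_def by simp
  note carriers = D mat_inverses_carrier[OF P] mat_inverses_carrier[OF Q] mat_inverses_carrier[OF C]
  have "D = P' * E * Q'"
    unfolding E_PDQ by (rule mat_inverses_solve[OF P Q D])
  also have "\<dots> = P' * (C * E * E) * Q'"
    by (simp only: regular[symmetric])
  also have "\<dots> = (P' * C * P) * (D * (Q * P) * D) * (Q * Q')"
    unfolding E_PDQ using carriers by (simp add: assoc_mult_mat[of _ "n + d" "n + d" _ "n + d" _ "n + d"])
  also have "\<dots> = (P' * C * P) * (D * (Q * P) * D)"
    using Q carriers unfolding mat_inverses_def by simp
  finally have "proj_mat n d = (P' * C * P) * (proj_mat n d * (Q * P) * proj_mat n d)"
    unfolding D_def .
  moreover have "Q * P \<in> carrier_mat (n + d) (n + d)" and "P' * C * P \<in> carrier_mat (n + d) (n + d)"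
    using carriers by auto
  ultimately show ?thesis
    using proj_mat_regular_corner_invertible[OF _ _ _ split] by blast
qed

lemma fitting_decomposition:
  fixes E :: "'k::field mat"
  assumes E: "E \<in> carrier_mat m m" and C: "mat_inverses m C C'" and regular: "E = C * E * E"
  shows "\<exists>S S' U U' n d. n + d = m \<and> mat_inverses m S S' \<and> mat_inverses n U U' \<and>
           E * S = S * block_diag U (0\<^sub>m d d)"
proof -
  obtain n d where nd: "n + d = m" and "mat_equiv m E (proj_mat n d)"
    using rank_normal_form[OF E] by blast
  then obtain P P' Q Q' where P: "mat_inverses m P P'" and Q: "mat_inverses m Q Q'"
    and E_eq: "E = P * proj_mat n d * Q"
    unfolding mat_equiv_def by blast
  obtain G1 G2 G3 G4 where split: "split_block (Q * P) n n = (G1, G2, G3, G4)"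
    by (metis prod_cases4)
  have G1: "G1 \<in> carrier_mat n n" and G2: "G2 \<in> carrier_mat n d" and G3: "G3 \<in> carrier_mat d n"
    and G4: "G4 \<in> carrier_mat d d" and G_eq: "Q * P = four_block_mat G1 G2 G3 G4"
    using split_block[OF split, of d d] mat_inverses_carrier[OF P] mat_inverses_carrier[OF Q] nd by auto
  obtain H where "mat_inverses n G1 H"
    using regular_rank_form_corner_invertible[OF _ _ _ E_eq regular split] P Q C nd by blast
  then obtain T T' where T: "mat_inverses m T T'"
    and GT: "four_block_mat G1 G2 (0\<^sub>m d n) (0\<^sub>m d d) * T = T * block_diag G1 (0\<^sub>m d d)"
    and G1_inv: "mat_inverses n G1 H"
    using upper_block_similar_block_diag[OF _ G2] nd by blast
  have DG: "proj_mat n d * (Q * P) = four_block_mat G1 G2 (0\<^sub>m d n) (0\<^sub>m d d)"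
    unfolding G_eq proj_mat_def block_diag_def using G1 G2 G3 G4
    by (simp add: mult_four_block_mat[of _ n n _ d _ d _ _ n _ d])
  have "(proj_mat n d :: 'k mat) \<in> carrier_mat m m" and "block_diag G1 (0\<^sub>m d d) \<in> carrier_mat m m"
    using G1 nd by auto
  note carriers = this mat_inverses_carrier[OF P] mat_inverses_carrier[OF Q] mat_inverses_carrier[OF T]
  have "E * (P * T) = P * (proj_mat n d * (Q * P) * T)"
    unfolding E_eq using carriers by (simp add: assoc_mult_mat[of _ m m _ m _ m])
  also have "\<dots> = P * T * block_diag G1 (0\<^sub>m d d)"
    unfolding DG GT using carriers by (simp add: assoc_mult_mat[of _ m m _ m _ m])
  finally show ?thesis
    using nd mat_inverses_mult[OF P T] G1_inv by blast
qed

section \<open>Posets\<close>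

context
  fixes P :: "'a set" and leq :: "'a \<Rightarrow> 'a \<Rightarrow> bool"
  assumes po: "partial_order_on' P leq"
begin

lemma po_refl: "x \<in> P \<Longrightarrow> leq x x"
  using po unfolding partial_order_on'_def by blast

lemma po_antisym: "x \<in> P \<Longrightarrow> y \<in> P \<Longrightarrow> leq x y \<Longrightarrow> leq y x \<Longrightarrow> x = y"
  using po unfolding partial_order_on'_def by blast

lemma po_trans: "x \<in> P \<Longrightarrow> y \<in> P \<Longrightarrow> z \<in> P \<Longrightarrow> leq x y \<Longrightarrow> leq y z \<Longrightarrow> leq x z"
  using po unfolding partial_order_on'_def by blast

lemma strict_le_trans:
  "x \<in> P \<Longrightarrow> y \<in> P \<Longrightarrow> z \<in> P \<Longrightarrow> strict leq x y \<Longrightarrow> leq y z \<Longrightarrow> strict leq x z"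
  unfolding strict_def by (metis po_antisym po_trans)

lemma le_strict_trans:
  "x \<in> P \<Longrightarrow> y \<in> P \<Longrightarrow> z \<in> P \<Longrightarrow> leq x y \<Longrightarrow> strict leq y z \<Longrightarrow> strict leq x z"
  unfolding strict_def by (metis po_antisym po_trans)

lemma card_strictly_below_less:
  assumes "finite P" "x \<in> P" "y \<in> P" "strict leq y x"
  shows "card {z \<in> P. strict leq z y} < card {z \<in> P. strict leq z x}"
proof (rule psubset_card_mono)
  show "{z \<in> P. strict leq z y} \<subset> {z \<in> P. strict leq z x}"
    using assms strict_le_trans[of _ y x] unfolding strict_def by auto
qed (use assms in auto)

lemma rooted_tree_le_unique_successor:
  assumes fin: "finite P" and tree: "hasse_rooted_tree P leq r" and s: "covers P leq r s"
    and unique: "\<And>s'. covers P leq r s' \<Longrightarrow> s' = s"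
  shows "x \<in> P \<Longrightarrow> x \<noteq> r \<Longrightarrow> leq s x"
proof (induction "card {z \<in> P. strict leq z x}" arbitrary: x rule: less_induct)
  case less
  obtain y where y: "covers P leq y x"
    using tree less.prems unfolding hasse_rooted_tree_def by blast
  then have yP: "y \<in> P" and yx: "strict leq y x"
    unfolding covers_def by auto
  show ?case
  proof (cases "y = r")
    case True
    then have "x = s" using unique y by blast
    then show ?thesis using po_refl less.prems(1) by simp
  next
    case False
    have "leq s y"
      using less.hyps[OF card_strictly_below_less[OF fin less.prems(1) yP yx] yP False] .
    moreover have "s \<in> P" and "leq y x" using s yx unfolding covers_def strict_def by simp_all
    ultimately show ?thesis
      using po_trans yP less.prems(1) by blast
  qed
qed

end

lemma covering_chain_of_comp_length:
  assumes "k \<le> comp_length P leq"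
  shows "\<exists>c. \<forall>i<k. covers P leq (c i) (c (Suc i))"
proof (rule ccontr)
  let ?lengths = "{n. \<exists>c :: nat \<Rightarrow> 'a. \<forall>i<n. covers P leq (c i) (c (Suc i))}"
  assume no_chain: "\<nexists>c. \<forall>i<k. covers P leq (c i) (c (Suc i))"
  have bounded: "?lengths \<subseteq> {..<k}"
  proof
    fix n assume "n \<in> ?lengths"
    then obtain c where c: "\<forall>i<n. covers P leq (c i) (c (Suc i))" by blast
    have "\<not> k \<le> n"
    proof
      assume "k \<le> n"
      with c have "\<forall>i<k. covers P leq (c i) (c (Suc i))" by auto
      then show False using no_chain by blast
    qed
    then show "n \<in> {..<k}" by simp
  qed
  then have "finite ?lengths" by (rule finite_subset) simp
  moreover have "0 \<in> ?lengths" by simp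
  ultimately have "Max ?lengths \<in> ?lengths" by (intro Max_in) auto
  then have "Max ?lengths < k" using bounded by blast
  then show False
    using assms unfolding comp_length_def by simp
qed

locale stem_poset =
  fixes P :: "'a set" and leq :: "'a \<Rightarrow> 'a \<Rightarrow> bool" and r s :: 'a
  assumes po: "partial_order_on' P leq"
    and root_in: "r \<in> P" and succ_in: "s \<in> P" and root_below_succ: "strict leq r s"
    and succ_le: "\<And>x. x \<in> P \<Longrightarrow> x \<noteq> r \<Longrightarrow> leq s x"
    and chain_above_succ: "\<exists>t\<in>P. \<exists>w\<in>P. strict leq s t \<and> strict leq t w"
begin

lemma not_below_root:
  assumes "y \<in> P" shows "\<not> strict leq y r"
proof
  assume yr: "strict leq y r"
  then have "leq s y" using succ_le[OF assms] unfolding strict_def by simp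
  then have "leq r y"
    using po_trans[OF po root_in succ_in assms] root_below_succ unfolding strict_def by simp
  then show False using yr po_antisym[OF po assms root_in] unfolding strict_def by simp
qed

lemma root_neq_succ: "r \<noteq> s"
  using root_below_succ unfolding strict_def by simp

lemma succ_strict: "x \<in> P \<Longrightarrow> x \<noteq> r \<Longrightarrow> x \<noteq> s \<Longrightarrow> strict leq s x"
  using succ_le unfolding strict_def by simp

end

lemma stem_poset_of_rooted_tree:
  assumes fin: "finite P" and po: "partial_order_on' P leq" and length: "comp_length P leq \<ge> 3"
    and tree: "hasse_rooted_tree P leq r" and s: "covers P leq r s"
    and unique: "\<And>s'. covers P leq r s' \<Longrightarrow> s' = s"
  shows "stem_poset P leq r s"
proof
  show "partial_order_on' P leq" by (rule po)
  show rP: "r \<in> P" and sP: "s \<in> P" and "strict leq r s"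
    using s unfolding covers_def by simp_all
  show succ_le: "leq s x" if "x \<in> P" "x \<noteq> r" for x
    using rooted_tree_le_unique_successor[OF po fin tree s unique that] .
  obtain c where c: "\<forall>i<3. covers P leq (c i) (c (Suc i))"
    using covering_chain_of_comp_length[OF length] by blast
  then have "covers P leq (c 0) (c 1)" "covers P leq (c 1) (c 2)" "covers P leq (c 2) (c 3)"
    by (simp_all add: numeral_eq_Suc)
  then have cP: "c 0 \<in> P" "c 1 \<in> P" "c 2 \<in> P" "c 3 \<in> P" and c01: "strict leq (c 0) (c 1)"
    and c12: "strict leq (c 1) (c 2)" and c23: "strict leq (c 2) (c 3)"
    unfolding covers_def by simp_all
  have "c 1 \<noteq> r"
    using tree cP(1) c01 unfolding hasse_rooted_tree_def by blast
  then have "strict leq s (c 2)"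
    using le_strict_trans[OF po sP cP(2,3) succ_le[OF cP(2)] c12] by simp
  then show "\<exists>t\<in>P. \<exists>w\<in>P. strict leq s t \<and> strict leq t w"
    using cP c23 by blast
qed

section \<open>Modules\<close>

lemma const_mod_simps [simp]:
  "fst (const_mod :: ('a, 'k::field) pmod) x = 1" "snd (const_mod :: ('a, 'k::field) pmod) x y = 1\<^sub>m 1"
  unfolding const_mod_def by simp_all

lemma S_mod_simps [simp]:
  "fst (S_mod :: ('a, 'k::field) pmod) x = 1"
  "snd (S_mod :: ('a, 'k::field) pmod) x y = (if x = y then 1\<^sub>m 1 else 0\<^sub>m 1 1)"
  unfolding S_mod_def by simp_all

lemma pmod_sum_simps [simp]:
  "fst (pmod_sum M N) x = fst M x + fst N x"
  "snd (pmod_sum M N) x y =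
     four_block_mat (snd M x y) (0\<^sub>m (fst M y) (fst N x)) (0\<^sub>m (fst N y) (fst M x)) (snd N x y)"
  unfolding pmod_sum_def by simp_all

lemma pmod_zero_simps [simp]: "fst pmod_zero x = 0" "snd pmod_zero x y = 0\<^sub>m 0 0"
  unfolding pmod_zero_def by simp_all

lemma fst_const_mod_pow [simp]: "fst (pmod_pow (const_mod :: ('a, 'k::field) pmod) n) x = n"
  by (induction n) simp_all

lemma snd_const_mod_pow: "snd (pmod_pow (const_mod :: ('a, 'k::field) pmod) n) x y = 1\<^sub>m n"
  by (induction n) (auto intro!: eq_matI simp: four_block_one_mat[of 1 n, simplified])

lemma fst_S_mod_pow [simp]: "fst (pmod_pow (S_mod :: ('a, 'k::field) pmod) d) x = d"
  by (induction d) simp_all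

lemma snd_S_mod_pow:
  "snd (pmod_pow (S_mod :: ('a, 'k::field) pmod) d) x y = (if x = y then 1\<^sub>m d else 0\<^sub>m d d)"
  by (induction d) (auto intro!: eq_matI)

lemma const_S_sum:
  "fst (pmod_sum (pmod_pow const_mod n) (pmod_pow S_mod d)) x = n + d"
  "snd (pmod_sum (pmod_pow (const_mod :: ('a, 'k::field) pmod) n) (pmod_pow S_mod d)) x y =
     (if x = y then 1\<^sub>m (n + d) else proj_mat n d)"
  by (simp_all add: snd_const_mod_pow snd_S_mod_pow proj_mat_def block_diag_def)

lemma pmod_iso_const_S_sum:
  fixes M :: "('a, 'k::field) pmod"
  assumes pmod: "is_pmod P leq M" and dims: "\<And>x. x \<in> P \<Longrightarrow> fst M x = n + d"
    and inv: "\<And>x. x \<in> P \<Longrightarrow> mat_inverses (n + d) (\<Psi> x) (\<Psi>' x)"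
    and comm: "\<And>x y. x \<in> P \<Longrightarrow> y \<in> P \<Longrightarrow> strict leq x y \<Longrightarrow> snd M x y * \<Psi> x = \<Psi> y * proj_mat n d"
  shows "pmod_iso P leq M (pmod_sum (pmod_pow const_mod n) (pmod_pow S_mod d))"
  unfolding pmod_iso_def
proof (intro exI[of _ \<Psi>'] conjI ballI impI)
  fix x assume x: "x \<in> P"
  show "\<Psi>' x \<in> carrier_mat (fst (pmod_sum (pmod_pow const_mod n) (pmod_pow S_mod d)) x) (fst M x)"
    using mat_inverses_carrier[OF inv[OF x]] dims[OF x] unfolding const_S_sum by simp
  show "invertible_mat (\<Psi>' x)"
    using invertible_mat_iff_mat_inverses mat_inverses_sym[OF inv[OF x]] mat_inverses_carrier[OF inv[OF x]]
    by blast
next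
  fix x y assume x: "x \<in> P" and y: "y \<in> P" and xy: "leq x y"
  have Mxy: "snd M x y \<in> carrier_mat (n + d) (n + d)"
    using pmod x y xy dims unfolding is_pmod_def by metis
  show "\<Psi>' y * snd M x y = snd (pmod_sum (pmod_pow const_mod n) (pmod_pow S_mod d)) x y * \<Psi>' x"
  proof (cases "x = y")
    case True
    have "snd M x x = 1\<^sub>m (n + d)"
      using pmod x dims unfolding is_pmod_def by metis
    then show ?thesis
      using True mat_inverses_carrier[OF inv[OF x]] unfolding const_S_sum by simp
  next
    case False
    then have "snd M x y = \<Psi> y * proj_mat n d * \<Psi>' x"
      using comm[OF x y] xy mat_inverses_cancel_right[OF inv[OF x] Mxy] unfolding strict_def by metis
    then have "\<Psi>' y * snd M x y = \<Psi>' y * \<Psi> y * proj_mat n d * \<Psi>' x"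
      using mat_inverses_carrier[OF inv[OF x]] mat_inverses_carrier[OF inv[OF y]]
      by (simp add: assoc_mult_mat[of _ "n + d" "n + d" _ "n + d" _ "n + d"])
    moreover have "(proj_mat n d :: 'k mat) \<in> carrier_mat (n + d) (n + d)" by simp
    ultimately show ?thesis
      using False inv[OF y] mat_inverses_carrier[OF inv[OF x]] unfolding mat_inverses_def
      unfolding const_S_sum by simp
  qed
qed

lemma map_rank_kernel_dim_of_trivialization:
  fixes M :: "('a, 'k::field) pmod"
  assumes pmod: "is_pmod P leq M" and dims: "\<And>x. x \<in> P \<Longrightarrow> fst M x = n + d"
    and inv: "\<And>x. x \<in> P \<Longrightarrow> mat_inverses (n + d) (\<Psi> x) (\<Psi>' x)"
    and comm: "\<And>x y. x \<in> P \<Longrightarrow> y \<in> P \<Longrightarrow> strict leq x y \<Longrightarrow> snd M x y * \<Psi> x = \<Psi> y * proj_mat n d"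
    and x: "x \<in> P" and y: "y \<in> P" and xy: "strict leq x y"
  shows "mat_rank (snd M x y) = n" and "kernel_dim (snd M x y) = d"
proof -
  have Mxy: "snd M x y \<in> carrier_mat (n + d) (n + d)"
    using pmod x y xy dims unfolding is_pmod_def strict_def by metis
  have "\<Psi>' y * snd M x y * \<Psi> x = proj_mat n d"
    using mat_inverses_cancel_left[OF inv[OF y], of "proj_mat n d" "n + d"] comm[OF x y xy] Mxy
      mat_inverses_carrier[OF inv[OF x]] mat_inverses_carrier[OF inv[OF y]]
    by (simp add: assoc_mult_mat[of _ "n + d" "n + d" _ "n + d" _ "n + d"])
  then have "mat_equiv (n + d) (snd M x y) (proj_mat n d)"
    using mat_equivI[OF mat_inverses_sym[OF inv[OF y]] inv[OF x] Mxy] by blast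
  then show "mat_rank (snd M x y) = n" and "kernel_dim (snd M x y) = d"
    by (rule mat_rank_kernel_dim_equiv_proj_mat)+
qed

lemma pmod_iso_pullbacksE:
  assumes "pmod_iso (G1_carrier P leq) (G1_le leq) (pullback d0 M) (pullback d1 M)"
  obtains \<phi> where
    "\<And>a b. a \<in> P \<Longrightarrow> b \<in> P \<Longrightarrow> strict leq a b \<Longrightarrow>
      \<phi> (a, b) \<in> carrier_mat (fst M a) (fst M b) \<and> invertible_mat (\<phi> (a, b))"
    "\<And>a b c e. a \<in> P \<Longrightarrow> b \<in> P \<Longrightarrow> c \<in> P \<Longrightarrow> e \<in> P \<Longrightarrow>
      strict leq a b \<Longrightarrow> strict leq c e \<Longrightarrow> leq b c \<Longrightarrow> \<phi> (c, e) * snd M b e = snd M a c * \<phi> (a, b)"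
  using assms unfolding pmod_iso_def pullback_def d0_def d1_def G1_carrier_def G1_le_def by fastforce

(* phi (a, b) : M b -> M a is the component at [a<b] of an isomorphism between the pullbacks
   of M along d0 and d1, natural along [a<b] <= [c<e]. *)
locale G0_module = stem_poset P leq r s
  for P :: "'a set" and leq :: "'a \<Rightarrow> 'a \<Rightarrow> bool" and r s :: 'a +
  fixes M :: "('a, 'k::field) pmod" and \<phi> :: "'a \<times> 'a \<Rightarrow> 'k mat"
  assumes pmod: "is_pmod P leq M"
    and \<phi>_iso: "\<And>a b. a \<in> P \<Longrightarrow> b \<in> P \<Longrightarrow> strict leq a b \<Longrightarrow>
      \<phi> (a, b) \<in> carrier_mat (fst M a) (fst M b) \<and> invertible_mat (\<phi> (a, b))"
    and \<phi>_natural: "\<And>a b c e. a \<in> P \<Longrightarrow> b \<in> P \<Longrightarrow> c \<in> P \<Longrightarrow> e \<in> P \<Longrightarrow>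
      strict leq a b \<Longrightarrow> strict leq c e \<Longrightarrow> leq b c \<Longrightarrow> \<phi> (c, e) * snd M b e = snd M a c * \<phi> (a, b)"
begin

definition dimM :: nat where "dimM = fst M s"

lemma dim_eq: assumes "x \<in> P" shows "fst M x = dimM"
proof -
  have "fst M a = fst M b" if "a \<in> P" "b \<in> P" "strict leq a b" for a b
    using \<phi>_iso[OF that] unfolding invertible_mat_def square_mat.simps by auto
  then show ?thesis
    unfolding dimM_def using assms root_in succ_in root_below_succ succ_strict by metis
qed

lemma map_carrier: "x \<in> P \<Longrightarrow> y \<in> P \<Longrightarrow> leq x y \<Longrightarrow> snd M x y \<in> carrier_mat dimM dimM"
  using pmod dim_eq unfolding is_pmod_def by metis

lemma map_comp:
  "x \<in> P \<Longrightarrow> y \<in> P \<Longrightarrow> z \<in> P \<Longrightarrow> leq x y \<Longrightarrow> leq y z \<Longrightarrow> snd M y z * snd M x y = snd M x z"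
  using pmod unfolding is_pmod_def by blast

definition \<phi>_inv :: "'a \<times> 'a \<Rightarrow> 'k mat" where
  "\<phi>_inv u = (SOME B. mat_inverses dimM (\<phi> u) B)"

lemma \<phi>_inverses:
  assumes "a \<in> P" "b \<in> P" "strict leq a b"
  shows "mat_inverses dimM (\<phi> (a, b)) (\<phi>_inv (a, b))"
proof -
  have "\<phi> (a, b) \<in> carrier_mat dimM dimM" "invertible_mat (\<phi> (a, b))"
    using \<phi>_iso[OF assms] dim_eq assms by auto
  then show ?thesis
    unfolding \<phi>_inv_def by (metis invertible_mat_iff_mat_inverses someI_ex)
qed

definition E :: "'k mat" where "E = snd M r s * \<phi> (r, s)"

lemma E_carrier: "E \<in> carrier_mat dimM dimM"
  unfolding E_def using map_carrier[OF root_in succ_in] root_below_succ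
    mat_inverses_carrier[OF \<phi>_inverses[OF root_in succ_in root_below_succ]]
  unfolding strict_def by simp

lemma map_from_succ:
  assumes x: "x \<in> P" and sx: "strict leq s x"
  shows "snd M s x = \<phi>_inv (s, x) * E"
proof -
  have "\<phi> (s, x) * snd M s x = E"
    unfolding E_def using \<phi>_natural[OF root_in succ_in succ_in x root_below_succ sx po_refl[OF po succ_in]] .
  then show ?thesis
    using mat_inverses_cancel_left[OF \<phi>_inverses[OF succ_in x sx] map_carrier[OF succ_in x]] sx
    unfolding strict_def by auto
qed

lemma map_above_succ:
  assumes x: "x \<in> P" and y: "y \<in> P" and sx: "strict leq s x" and xy: "strict leq x y"
  shows "snd M x y * \<phi>_inv (s, x) = \<phi>_inv (x, y) * \<phi>_inv (s, x) * E"
proof -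
  note sx_inv = \<phi>_inverses[OF succ_in x sx] and xy_inv = \<phi>_inverses[OF x y xy]
  have Mxy: "snd M x y \<in> carrier_mat dimM dimM"
    using map_carrier[OF x y] xy unfolding strict_def by simp
  note carriers = Mxy E_carrier mat_inverses_carrier[OF sx_inv] mat_inverses_carrier[OF xy_inv]
  have "\<phi> (x, y) * snd M x y = \<phi>_inv (s, x) * E * \<phi> (s, x)"
    using \<phi>_natural[OF succ_in x x y sx xy po_refl[OF po x]] map_from_succ[OF x sx] by simp
  then have "snd M x y = \<phi>_inv (x, y) * (\<phi>_inv (s, x) * E * \<phi> (s, x))"
    using mat_inverses_cancel_left[OF xy_inv Mxy] by simp
  then have "snd M x y * \<phi>_inv (s, x) = \<phi>_inv (x, y) * \<phi>_inv (s, x) * E * (\<phi> (s, x) * \<phi>_inv (s, x))"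
    using carriers by (simp add: assoc_mult_mat[of _ dimM dimM _ dimM _ dimM])
  then show ?thesis
    using sx_inv carriers unfolding mat_inverses_def by simp
qed

lemma E_regular: "\<exists>C C'. mat_inverses dimM C C' \<and> E = C * E * E"
proof -
  \<comment> \<open>Naturality along [r<s] <= [t<w]; this is where composition length at least 3 is used.\<close>
  obtain t w where t: "t \<in> P" and w: "w \<in> P" and st: "strict leq s t" and tw: "strict leq t w"
    using chain_above_succ by blast
  have sw: "strict leq s w" using strict_le_trans[OF po succ_in t w st] tw unfolding strict_def by simp
  note st_inv = \<phi>_inverses[OF succ_in t st] and tw_inv = \<phi>_inverses[OF t w tw]
    and sw_inv = \<phi>_inverses[OF succ_in w sw] and rs_inv = \<phi>_inverses[OF root_in succ_in root_below_succ]
  note carriers = E_carrier mat_inverses_carrier[OF st_inv] mat_inverses_carrier[OF tw_inv]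
    mat_inverses_carrier[OF sw_inv] mat_inverses_carrier[OF rs_inv]
    map_carrier[OF root_in succ_in] root_below_succ[unfolded strict_def]
  have "snd M r t = \<phi>_inv (s, t) * E * snd M r s"
    using map_comp[OF root_in succ_in t] map_from_succ[OF t st] root_below_succ st
    unfolding strict_def by simp
  then have "\<phi> (t, w) * (\<phi>_inv (s, w) * E) = \<phi>_inv (s, t) * E * E"
    using \<phi>_natural[OF root_in succ_in t w root_below_succ tw] st map_from_succ[OF w sw] carriers
    unfolding E_def strict_def by (simp add: assoc_mult_mat[of _ dimM dimM _ dimM _ dimM])
  moreover have "\<phi>_inv (s, w) * E = \<phi>_inv (t, w) * (\<phi> (t, w) * (\<phi>_inv (s, w) * E))"
    using mat_inverses_cancel_left[OF tw_inv, of "\<phi>_inv (s, w) * E" dimM] carriers by simp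
  ultimately have "\<phi>_inv (s, w) * E = \<phi>_inv (t, w) * (\<phi>_inv (s, t) * E * E)"
    by simp
  then have "E = \<phi> (s, w) * (\<phi>_inv (t, w) * (\<phi>_inv (s, t) * E * E))"
    using mat_inverses_cancel_left[OF mat_inverses_sym[OF sw_inv] E_carrier] by simp
  then have "E = \<phi> (s, w) * \<phi>_inv (t, w) * \<phi>_inv (s, t) * E * E"
    using carriers by (simp add: assoc_mult_mat[of _ dimM dimM _ dimM _ dimM])
  moreover have "mat_inverses dimM (\<phi> (s, w) * \<phi>_inv (t, w) * \<phi>_inv (s, t))
      (\<phi> (s, t) * (\<phi> (t, w) * \<phi>_inv (s, w)))"
    using mat_inverses_mult[OF mat_inverses_mult[OF sw_inv mat_inverses_sym[OF tw_inv]] mat_inverses_sym[OF st_inv]] .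
  ultimately show ?thesis by blast
qed

end

locale G0_module_fitting = G0_module P leq r s M \<phi>
  for P :: "'a set" and leq r s and M :: "('a, 'k::field) pmod" and \<phi> +
  fixes n d :: nat and S S' U U' :: "'k mat"
  assumes dim_split: "n + d = dimM" and S_inv: "mat_inverses dimM S S'" and U_inv: "mat_inverses n U U'"
    and E_split: "E * S = S * block_diag U (0\<^sub>m d d)"
begin

(* Bases of the stalks adapted to the splitting of M(s): the factor block_diag U^-1 1 at r and
   block_diag U 1 above s absorb the invertible part of E, so all structure maps become proj_mat. *)
definition triv :: "'a \<Rightarrow> 'k mat" where
  "triv x = (if x = r then \<phi> (r, s) * S * block_diag U' (1\<^sub>m d)
             else if x = s then S else \<phi>_inv (s, x) * S * block_diag U (1\<^sub>m d))"

definition triv_inv :: "'a \<Rightarrow> 'k mat" where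
  "triv_inv x = (if x = r then block_diag U (1\<^sub>m d) * (S' * \<phi>_inv (r, s))
                 else if x = s then S' else block_diag U' (1\<^sub>m d) * (S' * \<phi> (s, x)))"

lemma triv_succ: "triv s = S"
  unfolding triv_def using root_neq_succ by simp

lemma triv_inverses: assumes x: "x \<in> P" shows "mat_inverses dimM (triv x) (triv_inv x)"
proof -
  have K: "mat_inverses dimM (block_diag U (1\<^sub>m d)) (block_diag U' (1\<^sub>m d))"
    using mat_inverses_block_diag[OF U_inv mat_inverses_one[of d]] dim_split by simp
  consider "x = r" | "x = s" | "x \<noteq> r" "x \<noteq> s" by blast
  then show ?thesis
  proof cases
    case 1
    then show ?thesis unfolding triv_def triv_inv_def
      using mat_inverses_mult[OF mat_inverses_mult[OF \<phi>_inverses[OF root_in succ_in root_below_succ] S_inv]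
          mat_inverses_sym[OF K]] by simp
  next
    case 2
    then show ?thesis unfolding triv_def triv_inv_def using S_inv root_neq_succ by simp
  next
    case 3
    then show ?thesis unfolding triv_def triv_inv_def
      using mat_inverses_mult[OF mat_inverses_mult[OF mat_inverses_sym[OF \<phi>_inverses[OF succ_in x]] S_inv] K]
        succ_strict[OF x] by simp
  qed
qed

lemma proj_carrier: "(proj_mat n d :: 'k mat) \<in> carrier_mat dimM dimM"
  unfolding dim_split[symmetric] by (rule proj_mat_carrier)

lemma fitting_carriers:
  "block_diag U (1\<^sub>m d) \<in> carrier_mat dimM dimM" "block_diag U' (1\<^sub>m d) \<in> carrier_mat dimM dimM"
  "block_diag U (0\<^sub>m d d) \<in> carrier_mat dimM dimM" "S \<in> carrier_mat dimM dimM"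
  using mat_inverses_carrier[OF U_inv] mat_inverses_carrier[OF S_inv] dim_split[symmetric]
  by (simp_all add: block_diag_carrier)

lemma E_mult_S: "X \<in> carrier_mat dimM k \<Longrightarrow> E * (S * X) = S * (block_diag U (0\<^sub>m d d) * X)"
  using E_split E_carrier fitting_carriers
  by (metis assoc_mult_mat)

lemma unit_block_identities:
  "block_diag U (1\<^sub>m d) * proj_mat n d = block_diag U (0\<^sub>m d d)"
  "block_diag U (0\<^sub>m d d) * block_diag U' (1\<^sub>m d) = proj_mat n d"
  "block_diag U (0\<^sub>m d d) * block_diag U (1\<^sub>m d) = block_diag U (0\<^sub>m d d) * block_diag U (0\<^sub>m d d)"
  using U_inv unfolding proj_mat_def mat_inverses_def
  by (auto simp: block_diag_mult[of _ n n _ n _ d d _ d])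

lemma map_from_succ_S:
  assumes y: "y \<in> P" and sy: "strict leq s y"
  shows "snd M s y * S = triv y * proj_mat n d"
proof -
  have "y \<noteq> r" "y \<noteq> s" using sy not_below_root[OF succ_in] unfolding strict_def by auto
  then have "triv y * proj_mat n d = \<phi>_inv (s, y) * S * block_diag U (0\<^sub>m d d)"
    unfolding triv_def unit_block_identities(1)[symmetric]
    using fitting_carriers mat_inverses_carrier[OF \<phi>_inverses[OF succ_in y sy]]
      proj_carrier
    by (simp add: assoc_mult_mat[of _ dimM dimM _ dimM _ dimM])
  also have "\<dots> = snd M s y * S"
    unfolding map_from_succ[OF y sy]
    using fitting_carriers E_carrier mat_inverses_carrier[OF \<phi>_inverses[OF succ_in y sy]]
    by (simp add: assoc_mult_mat[of _ dimM dimM _ dimM _ dimM] E_split)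
  finally show ?thesis by simp
qed

lemma map_triv_root_succ: "snd M r s * triv r = triv s * proj_mat n d"
proof -
  have "snd M r s * triv r = E * S * block_diag U' (1\<^sub>m d)"
    unfolding triv_def E_def
    using fitting_carriers map_carrier[OF root_in succ_in] root_below_succ
      mat_inverses_carrier[OF \<phi>_inverses[OF root_in succ_in root_below_succ]]
    unfolding strict_def by (simp add: assoc_mult_mat[of _ dimM dimM _ dimM _ dimM])
  also have "\<dots> = S * proj_mat n d"
    unfolding E_split unit_block_identities(2)[symmetric]
    using fitting_carriers by (simp add: assoc_mult_mat[of _ dimM dimM _ dimM _ dimM])
  finally show ?thesis
    unfolding triv_succ .
qed

lemma map_triv_above_succ:
  assumes x: "x \<in> P" and y: "y \<in> P" and sx: "strict leq s x" and xy: "strict leq x y"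
  shows "snd M x y * triv x = triv y * proj_mat n d"
proof -
  let ?J = "block_diag U (0\<^sub>m d d)" and ?Z = "\<phi>_inv (x, y) * \<phi>_inv (s, x)"
  have sy: "strict leq s y" using strict_le_trans[OF po succ_in x y sx] xy unfolding strict_def by simp
  have "x \<noteq> r" "x \<noteq> s" using sx not_below_root[OF succ_in] unfolding strict_def by auto
  note carriers = fitting_carriers E_carrier mat_inverses_carrier[OF \<phi>_inverses[OF succ_in x sx]]
    mat_inverses_carrier[OF \<phi>_inverses[OF x y xy]]
  have "snd M x y * triv x = ?Z * E * S * block_diag U (1\<^sub>m d)"
    unfolding triv_def map_above_succ[OF x y sx xy, symmetric] using \<open>x \<noteq> r\<close> \<open>x \<noteq> s\<close> carriers
      map_carrier[OF x y] xy unfolding strict_def by (simp add: assoc_mult_mat[of _ dimM dimM _ dimM _ dimM])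
  also have "\<dots> = ?Z * S * (?J * ?J)"
    using carriers by (simp add: assoc_mult_mat[of _ dimM dimM _ dimM _ dimM] E_mult_S unit_block_identities(3))
  also have "\<dots> = ?Z * E * (E * S)"
    using carriers by (simp add: assoc_mult_mat[of _ dimM dimM _ dimM _ dimM] E_split E_mult_S)
  also have "\<dots> = snd M x y * \<phi>_inv (s, x) * (E * S)"
    by (simp only: map_above_succ[OF x y sx xy])
  also have "\<dots> = snd M x y * snd M s x * S"
    unfolding map_from_succ[OF x sx] using carriers map_carrier[OF x y] xy
    unfolding strict_def by (simp add: assoc_mult_mat[of _ dimM dimM _ dimM _ dimM])
  also have "\<dots> = triv y * proj_mat n d"
    using map_comp[OF succ_in x y] sx xy map_from_succ_S[OF y sy] unfolding strict_def by simp
  finally show ?thesis .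
qed

lemma map_triv_root_above_succ:
  assumes y: "y \<in> P" and sy: "strict leq s y"
  shows "snd M r y * triv r = triv y * proj_mat n d"
proof -
  have Msy: "snd M s y \<in> carrier_mat dimM dimM"
    using map_carrier[OF succ_in y] sy unfolding strict_def by simp
  have "snd M r y = snd M s y * snd M r s"
    using map_comp[OF root_in succ_in y] root_below_succ sy unfolding strict_def by simp
  then have "snd M r y * triv r = snd M s y * (snd M r s * triv r)"
    using Msy map_carrier[OF root_in succ_in] root_below_succ
      mat_inverses_carrier[OF triv_inverses[OF root_in]]
    unfolding strict_def by (simp add: assoc_mult_mat[of _ dimM dimM _ dimM _ dimM])
  also have "\<dots> = snd M s y * S * proj_mat n d"
    unfolding map_triv_root_succ triv_succ using Msy fitting_carriers proj_carrier
    by (simp add: assoc_mult_mat[of _ dimM dimM _ dimM _ dimM])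
  also have "\<dots> = triv y * (proj_mat n d * proj_mat n d)"
    unfolding map_from_succ_S[OF y sy] using proj_carrier mat_inverses_carrier[OF triv_inverses[OF y]]
    by (simp add: assoc_mult_mat[of _ dimM dimM _ dimM _ dimM])
  finally show ?thesis by (simp add: proj_mat_idem)
qed

lemma map_triv:
  assumes x: "x \<in> P" and y: "y \<in> P" and xy: "strict leq x y"
  shows "snd M x y * triv x = triv y * proj_mat n d"
proof -
  consider "x = r" "y = s" | "x = r" "y \<noteq> s" | "x = s" | "x \<noteq> r" "x \<noteq> s" by blast
  then show ?thesis
  proof cases
    case 1
    then show ?thesis using map_triv_root_succ by simp
  next
    case 2
    then have "strict leq s y" using succ_strict[OF y] xy unfolding strict_def by auto
    then show ?thesis using map_triv_root_above_succ[OF y] \<open>x = r\<close> by simp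
  next
    case 3
    then show ?thesis using map_from_succ_S[OF y] xy triv_succ by simp
  next
    case 4
    then show ?thesis using map_triv_above_succ[OF x y _ xy] succ_strict[OF x] by simp
  qed
qed

end

lemma (in G0_module) trivializationE:
  obtains n d \<Psi> \<Psi>' where "n + d = dimM" and "\<And>x. x \<in> P \<Longrightarrow> mat_inverses dimM (\<Psi> x) (\<Psi>' x)"
    and "\<And>x y. x \<in> P \<Longrightarrow> y \<in> P \<Longrightarrow> strict leq x y \<Longrightarrow> snd M x y * \<Psi> x = \<Psi> y * proj_mat n d"
proof -
  obtain C C' where C: "mat_inverses dimM C C'" and regular: "E = C * E * E"
    using E_regular by blast
  obtain S S' U U' n d where split: "n + d = dimM" "mat_inverses dimM S S'" "mat_inverses n U U'"
    "E * S = S * block_diag U (0\<^sub>m d d)"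
    using fitting_decomposition[OF E_carrier C regular] by blast
  interpret G0_module_fitting P leq r s M \<phi> n d S S' U U'
    by unfold_locales (fact split)+
  show ?thesis
    using that[OF dim_split triv_inverses map_triv] .
qed

theorem theorem4p9:
  fixes P :: "'a set" and leq :: "'a \<Rightarrow> 'a \<Rightarrow> bool" and r :: 'a
    and M :: "('a, 'k::field) pmod"
  assumes "finite P"
    and "partial_order_on' P leq"
    and "comp_length P leq \<ge> 3"
    and "hasse_rooted_tree P leq r"
    and "\<exists>!s. covers P leq r s"
    and "is_pmod P leq M"
    and "pmod_iso (G1_carrier P leq) (G1_le leq) (pullback d0 M) (pullback d1 M)"
  shows "\<exists>n d. pmod_iso P leq M (pmod_sum (pmod_pow const_mod n) (pmod_pow S_mod d))
           \<and> (\<forall>x\<in>P. \<forall>y\<in>P. strict leq x y \<longrightarrow> n = mat_rank (snd M x y))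
           \<and> (\<forall>x\<in>P. \<forall>y\<in>P. (\<exists>z\<in>P. strict leq x z) \<and> strict leq x y
                 \<longrightarrow> d = kernel_dim (snd M x y))"
proof -
  obtain s where s: "covers P leq r s" and unique: "\<And>s'. covers P leq r s' \<Longrightarrow> s' = s"
    using assms(5) by blast
  obtain \<phi> where
    "\<And>a b. a \<in> P \<Longrightarrow> b \<in> P \<Longrightarrow> strict leq a b \<Longrightarrow>
      \<phi> (a, b) \<in> carrier_mat (fst M a) (fst M b) \<and> invertible_mat (\<phi> (a, b))"
    "\<And>a b c e. a \<in> P \<Longrightarrow> b \<in> P \<Longrightarrow> c \<in> P \<Longrightarrow> e \<in> P \<Longrightarrow>
      strict leq a b \<Longrightarrow> strict leq c e \<Longrightarrow> leq b c \<Longrightarrow> \<phi> (c, e) * snd M b e = snd M a c * \<phi> (a, b)"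
    using pmod_iso_pullbacksE[OF assms(7)] by blast
  then interpret G0_module P leq r s M \<phi>
    using stem_poset_of_rooted_tree[OF assms(1-4) s unique] assms(6)
    by (simp add: G0_module_def G0_module_axioms_def)
  obtain n d \<Psi> \<Psi>' where nd: "n + d = dimM" and inv: "\<And>x. x \<in> P \<Longrightarrow> mat_inverses dimM (\<Psi> x) (\<Psi>' x)"
    and comm: "\<And>x y. x \<in> P \<Longrightarrow> y \<in> P \<Longrightarrow> strict leq x y \<Longrightarrow> snd M x y * \<Psi> x = \<Psi> y * proj_mat n d"
    using trivializationE by blast
  have dims: "\<And>x. x \<in> P \<Longrightarrow> fst M x = n + d"
    using dim_eq nd by simp
  note trivialization = assms(6) dims inv[unfolded nd[symmetric]] comm
  show ?thesis
    using pmod_iso_const_S_sum[OF trivialization] map_rank_kernel_dim_of_trivialization[OF trivialization]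
    by metis
qed

end
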